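(* For every integer $k\ge 1$, let $\mathcal{F}^2(k)=\gcd\{\sum_{i=1}^k F_{n+i}^2 : n \ge 0\}$. Then $$\mathcal{F}^2(k) = \begin{cases} F_k, & \text{if $k$ is even},\\ 2, & \text{if $k \equiv 3 \pmod{6}$},\\ 1, & \text{if $k \equiv 1,5 \pmod{6}$}.\end{cases}$$
   Context: $(F_n)$ is the Fibonacci sequence: $F_0=0$, $F_1=1$, $F_n=F_{n-1}+F_{n-2}$. *)

theory Defs
  imports "HOL-Number_Theory.Fib"
begin

definition fib_sq_gcd :: "nat \<Rightarrow> nat" where
  "fib_sq_gcd k = Gcd {(\<Sum>i=1..k. (fib (n + i))^2) | n. True}"

end

theory Submission
  imports Defs
begin

text \<open>The sum of squares telescopes to \<open>F(n+k) F(n+k+1) - F(n) F(n+1)\<close>, and the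
  addition formula together with Cassini's identity rewrites this as
  \<open>F(k) F(2n+k+1) - (1 - (-1)^k) F(n) F(n+1)\<close>. For even \<open>k\<close> every sum is therefore a
  multiple of \<open>F(k)\<close>, for odd \<open>k\<close> it is \<open>-2 F(n) F(n+1)\<close> modulo \<open>F(k)\<close>. Conversely the
  sums for \<open>n = 0, 1\<close> force the gcd to divide \<open>F(k)\<close>, and for odd \<open>k\<close> also \<open>2\<close>; the rest
  is the parity of \<open>F(k)\<close>, which is even exactly when \<open>3\<close> divides \<open>k\<close>.\<close>

lemma sum_fib_squares_telescope:
  "(\<Sum>i=1..k. fib (n + i)^2) + fib n * fib (Suc n) = fib (n + k) * fib (Suc (n + k))"
proof (induction k)
  case 0
  then show ?case by simp
next
  case (Suc k)
  then show ?case
    by (simp add: power2_eq_square algebra_simps)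
qed

lemma fib_mult_fib_Suc_add:
  "int (fib (n + k) * fib (Suc (n + k)))
     = int (fib k * fib (Suc (2 * n + k))) + (-1)^k * int (fib n * fib (Suc n))"
proof (cases k)
  case 0
  then show ?thesis by simp
next
  case (Suc m)
  define a b where "a = int (fib m)" and "b = int (fib (Suc m))"
  define f0 f1 where "f0 = int (fib n)" and "f1 = int (fib (Suc n))"
  have cassini: "a^2 + a * b - b^2 = - ((-1)^m)"
    using fib_Cassini_int[of m] unfolding a_def b_def by (simp add: power2_eq_square algebra_simps)
  have lo: "int (fib (n + k)) = b * f1 + a * f0"
    using fib_add[of n m] unfolding Suc a_def b_def f0_def f1_def by simp
  have hi: "int (fib (Suc (n + k))) = b * (f0 + f1) + a * f1"
    using fib_add[of "Suc n" m] unfolding Suc a_def b_def f0_def f1_def by simp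
  have mid: "int (fib (Suc (2 * n + k))) = f1 * (b * (f0 + f1) + a * f1) + f0 * (b * f1 + a * f0)"
  proof -
    have "2 * n + k = (n + k) + n" by simp
    then have "fib (Suc (2 * n + k)) = fib (Suc n) * fib (Suc (n + k)) + fib n * fib (n + k)"
      using fib_add[of "n + k" n] by (simp only:)
    then show ?thesis
      using lo hi unfolding f0_def f1_def by simp
  qed
  have fib_k: "int (fib k) = b" and sign: "(-1::int)^k = - ((-1)^m)"
    unfolding Suc b_def by simp_all
  show ?thesis
    unfolding of_nat_mult lo hi mid fib_k sign f0_def [symmetric] f1_def [symmetric]
      cassini [symmetric]
    by (simp add: power2_eq_square algebra_simps)
qed

lemma sum_fib_squares_even:
  assumes "even k"
  shows "(\<Sum>i=1..k. fib (n + i)^2) = fib k * fib (Suc (2 * n + k))"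
proof -
  have "int (\<Sum>i=1..k. fib (n + i)^2) + int (fib n * fib (Suc n))
      = int (fib (n + k) * fib (Suc (n + k)))"
    by (simp only: of_nat_add [symmetric] sum_fib_squares_telescope)
  also have "\<dots> = int (fib k * fib (Suc (2 * n + k))) + int (fib n * fib (Suc n))"
    using fib_mult_fib_Suc_add [of n k] assms by simp
  finally show ?thesis
    by linarith
qed

lemma sum_fib_squares_odd:
  assumes "odd k"
  shows "(\<Sum>i=1..k. fib (n + i)^2) + 2 * (fib n * fib (Suc n)) = fib k * fib (Suc (2 * n + k))"
proof -
  have "int (\<Sum>i=1..k. fib (n + i)^2) + int (fib n * fib (Suc n))
      = int (fib (n + k) * fib (Suc (n + k)))"
    by (simp only: of_nat_add [symmetric] sum_fib_squares_telescope)
  also have "\<dots> = int (fib k * fib (Suc (2 * n + k))) - int (fib n * fib (Suc n))"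
    using fib_mult_fib_Suc_add [of n k] assms by simp
  finally show ?thesis
    by linarith
qed

lemma even_fib_iff: "even (fib n) \<longleftrightarrow> 3 dvd n"
proof -
  have fib_3: "fib 3 = 2"
    by (simp add: eval_nat_numeral)
  have "even (fib n) \<longleftrightarrow> gcd (fib 3) (fib n) = fib 3"
    by (simp add: fib_3 gcd_nat.absorb_iff1 [symmetric])
  also have "\<dots> \<longleftrightarrow> fib (gcd 3 (n mod 3)) = fib 3"
    by (metis fib_gcd gcd.commute gcd_red_nat)
  also have "\<dots> \<longleftrightarrow> n mod 3 = 0"
  proof -
    consider "n mod 3 = 0" | "n mod 3 = 1" | "n mod 3 = 2" by arith
    then show ?thesis by cases (simp_all add: fib_3)
  qed
  finally show ?thesis by presburger
qed

lemma fib_sq_gcd_dvd: "fib_sq_gcd k dvd (\<Sum>i=1..k. fib (n + i)^2)"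
  unfolding fib_sq_gcd_def by (rule Gcd_dvd) blast

lemma dvd_fib_sq_gcd:
  assumes "\<And>n. d dvd (\<Sum>i=1..k. fib (n + i)^2)"
  shows "d dvd fib_sq_gcd k"
  unfolding fib_sq_gcd_def using assms by (auto intro: Gcd_greatest)

lemma fib_sq_gcd_dvd_fib: "fib_sq_gcd k dvd fib k"
proof -
  define S0 S1 where "S0 = (\<Sum>i=1..k. fib (0 + i)^2)" and "S1 = (\<Sum>i=1..k. fib (1 + i)^2)"
  have "S0 + fib 0 * fib (Suc 0) = fib (0 + k) * fib (Suc (0 + k))"
    unfolding S0_def by (rule sum_fib_squares_telescope)
  then have sum0: "S0 = fib k * fib (Suc k)"
    by simp
  have "S1 + fib 1 * fib (Suc 1) = fib (1 + k) * fib (Suc (1 + k))"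
    unfolding S1_def by (rule sum_fib_squares_telescope)
  then have sum1: "S1 + 1 = fib (Suc k) * fib (Suc (Suc k))"
    by simp
  have "fib (Suc (Suc k)) * S0 = fib k * (S1 + 1)"
    by (simp only: sum0 sum1 mult.commute mult.left_commute)
  then have "fib (Suc (Suc k)) * S0 = fib k * S1 + fib k"
    by simp
  moreover have "fib_sq_gcd k dvd S0" "fib_sq_gcd k dvd S1"
    unfolding S0_def S1_def by (rule fib_sq_gcd_dvd)+
  ultimately show ?thesis
    by (metis dvd_add_right_iff dvd_mult)
qed

lemma fib_sq_gcd_even:
  assumes "even k"
  shows "fib_sq_gcd k = fib k"
proof (rule dvd_antisym)
  show "fib_sq_gcd k dvd fib k"
    by (rule fib_sq_gcd_dvd_fib)
  show "fib k dvd fib_sq_gcd k"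
    by (intro dvd_fib_sq_gcd) (simp only: sum_fib_squares_even [OF assms] dvd_triv_left)
qed

lemma fib_sq_gcd_odd_dvd_two:
  assumes "odd k"
  shows "fib_sq_gcd k dvd 2"
proof -
  have "(\<Sum>i=1..k. fib (1 + i)^2) + 2 = fib k * fib (Suc (2 + k))"
    using sum_fib_squares_odd [OF assms, of 1] by simp
  moreover have "fib_sq_gcd k dvd (\<Sum>i=1..k. fib (1 + i)^2)"
    by (rule fib_sq_gcd_dvd)
  ultimately show ?thesis
    by (metis dvd_add_right_iff dvd_mult2 fib_sq_gcd_dvd_fib)
qed

lemma fib_sq_gcd_odd_three_dvd:
  assumes "odd k" and "3 dvd k"
  shows "fib_sq_gcd k = 2"
proof (rule dvd_antisym)
  show "fib_sq_gcd k dvd 2"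
    using assms(1) by (rule fib_sq_gcd_odd_dvd_two)
  have "even (fib k)"
    using assms(2) by (simp add: even_fib_iff)
  then show "2 dvd fib_sq_gcd k"
    by (intro dvd_fib_sq_gcd) (metis sum_fib_squares_odd [OF assms(1)] dvd_add_left_iff dvd_mult2 dvd_triv_left)
qed

lemma fib_sq_gcd_odd_not_three_dvd:
  assumes "odd k" and "\<not> 3 dvd k"
  shows "fib_sq_gcd k = 1"
proof -
  have "odd (fib k)"
    using assms(2) by (simp add: even_fib_iff)
  then have "odd (fib_sq_gcd k)"
    using fib_sq_gcd_dvd_fib by (metis dvd_trans)
  moreover have "fib_sq_gcd k \<le> 2"
    using fib_sq_gcd_odd_dvd_two [OF assms(1)] by (rule dvd_imp_le) simp
  ultimately show ?thesis
    by presburger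
qed

theorem theorem5p2:
  fixes k :: nat
  assumes "k \<ge> 1"
  shows "(even k \<longrightarrow> fib_sq_gcd k = fib k)
       \<and> (k mod 6 = 3 \<longrightarrow> fib_sq_gcd k = 2)
       \<and> ((k mod 6 = 1 \<or> k mod 6 = 5) \<longrightarrow> fib_sq_gcd k = 1)"
proof (intro conjI impI)
  show "fib_sq_gcd k = fib k" if "even k"
    using that by (rule fib_sq_gcd_even)
  show "fib_sq_gcd k = 2" if "k mod 6 = 3"
    using that by (intro fib_sq_gcd_odd_three_dvd) presburger+
  show "fib_sq_gcd k = 1" if "k mod 6 = 1 \<or> k mod 6 = 5"
    using that by (intro fib_sq_gcd_odd_not_three_dvd) presburger+
qed

end
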